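(* Let $D$ be an integral domain, $R=R(D)$, and let $f,g\in D\setminus\{0\}$. The following are equivalent: (1) $\mathfrak p_g\subseteq\mathfrak p_f$; (2) $\sqrt{(\frac1g)R}\subseteq\sqrt{(\frac1f)R}$; (3) there exists $e\ge1$ such that $\frac1{g^e}\in(\frac1f)R$ (equivalently, $\frac f{g^e}\in R$).
   Context: For an integral domain $D$ with fraction field $F$, the reciprocal complement $R(D)$ is the subring of $F$ generated by all $1/d$, $d\in D\setminus\{0\}$. For nonzero $f\in D$, $\mathfrak p_f$ denotes the unique prime ideal of $R(D)$ maximal with respect to not containing $1/f$. $\sqrt I$ denotes the radical of an ideal $I$. *)

theory Defs
  imports "HOL-Computational_Algebra.Fraction_Field"
begin

text \<open>The integral domain D is the type 'a (class idom); its fraction field is 'a fract;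
  d is embedded as Fract d 1.\<close>

definition is_subring :: "'b::comm_ring_1 set \<Rightarrow> bool" where
  "is_subring S \<longleftrightarrow> 1 \<in> S \<and> (\<forall>x\<in>S. \<forall>y\<in>S. x + y \<in> S \<and> - x \<in> S \<and> x * y \<in> S)"

definition recip_compl :: "('a::idom) fract set" where
  "recip_compl = \<Inter> {S. is_subring S \<and> (\<forall>d::'a. d \<noteq> 0 \<longrightarrow> inverse (Fract d 1) \<in> S)}"

definition is_ideal_in :: "'b::comm_ring_1 set \<Rightarrow> 'b set \<Rightarrow> bool" where
  "is_ideal_in I R \<longleftrightarrow> I \<subseteq> R \<and> 0 \<in> I \<and> (\<forall>x\<in>I. \<forall>y\<in>I. x + y \<in> I)
     \<and> (\<forall>x\<in>I. \<forall>r\<in>R. r * x \<in> I)"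

definition is_prime_ideal_in :: "'b::comm_ring_1 set \<Rightarrow> 'b set \<Rightarrow> bool" where
  "is_prime_ideal_in P R \<longleftrightarrow> is_ideal_in P R \<and> P \<noteq> R
     \<and> (\<forall>x\<in>R. \<forall>y\<in>R. x * y \<in> P \<longrightarrow> x \<in> P \<or> y \<in> P)"

definition p_ideal :: "'a::idom \<Rightarrow> 'a fract set" where
  "p_ideal f = (THE P. is_prime_ideal_in P recip_compl \<and> inverse (Fract f 1) \<notin> P
     \<and> (\<forall>Q. is_prime_ideal_in Q recip_compl \<and> inverse (Fract f 1) \<notin> Q \<and> P \<subseteq> Q \<longrightarrow> Q = P))"

definition principal_in :: "'b::comm_ring_1 \<Rightarrow> 'b set \<Rightarrow> 'b set" where
  "principal_in x R = {x * r | r. r \<in> R}"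

definition radical_in :: "'b::comm_ring_1 set \<Rightarrow> 'b set \<Rightarrow> 'b set" where
  "radical_in I R = {x \<in> R. \<exists>n::nat. x ^ n \<in> I}"

end

theory Submission
  imports Defs
begin

(*
  R = R(D) consists of the finite sums of reciprocals 1/d. For a prime P of R, the set of
  d with 1/d \<notin> P is multiplicatively saturated and closed under nonzero sums, so a sum of
  such reciprocals lies in P only if it vanishes. Hence deleting from a representation
  x = \<Sum> 1/d\<^sub>i the terms lying in P is a well-defined ring endomorphism \<rho>\<^sub>P of R with
  kernel P. These retractions commute, so for primes P, Q avoiding 1/f the kernel of
  \<rho>\<^sub>P \<circ> \<rho>\<^sub>Q is a prime containing P and Q that still avoids 1/f: the primes avoiding 1/f
  form a directed family, and their union is p_f. Therefore p_g \<subseteq> p_f iff every prime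
  containing 1/f contains 1/g, which by Krull's lemma on prime ideals avoiding the powers
  of an element means that some power of 1/g lies in (1/f)R; this is also equivalent to
  the inclusion of radicals.
*)

section \<open>Ideals of a subring\<close>

lemma is_ideal_inD:
  assumes "is_ideal_in I R"
  shows "I \<subseteq> R" "0 \<in> I" "x \<in> I \<Longrightarrow> y \<in> I \<Longrightarrow> x + y \<in> I"
    "x \<in> I \<Longrightarrow> r \<in> R \<Longrightarrow> r * x \<in> I"
  using assms unfolding is_ideal_in_def by blast+

lemma is_prime_ideal_inD:
  assumes "is_prime_ideal_in P R"
  shows "is_ideal_in P R" "P \<noteq> R" "x \<in> R \<Longrightarrow> y \<in> R \<Longrightarrow> x * y \<in> P \<Longrightarrow> x \<in> P \<or> y \<in> P"
  using assms unfolding is_prime_ideal_in_def by blast+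

locale subring =
  fixes R :: "'b::comm_ring_1 set"
  assumes is_subring: "is_subring R"
begin

lemma one_mem: "1 \<in> R"
  and add_mem: "x \<in> R \<Longrightarrow> y \<in> R \<Longrightarrow> x + y \<in> R"
  and uminus_mem: "x \<in> R \<Longrightarrow> - x \<in> R"
  and mult_mem: "x \<in> R \<Longrightarrow> y \<in> R \<Longrightarrow> x * y \<in> R"
  using is_subring unfolding is_subring_def by blast+

lemma zero_mem: "0 \<in> R"
  using add_mem[OF one_mem uminus_mem[OF one_mem]] by simp

lemma power_mem: "x \<in> R \<Longrightarrow> x ^ n \<in> R"
  by (induction n) (simp_all add: one_mem mult_mem)

lemma prime_ideal_one_not_mem:
  assumes "is_prime_ideal_in P R"
  shows "1 \<notin> P"
proof
  assume "1 \<in> P"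
  then have "R \<subseteq> P"
    using is_ideal_inD(4)[OF is_prime_ideal_inD(1)[OF assms]] by fastforce
  then show False
    using assms is_ideal_inD(1) is_prime_ideal_inD(1,2) by blast
qed

lemma prime_ideal_power_mem:
  assumes P: "is_prime_ideal_in P R" and "x \<in> R" "x ^ n \<in> P"
  shows "x \<in> P"
  using \<open>x ^ n \<in> P\<close>
proof (induction n)
  case 0
  then show ?case using prime_ideal_one_not_mem[OF P] by simp
next
  case (Suc n)
  then show ?case using is_prime_ideal_inD(3)[OF P \<open>x \<in> R\<close> power_mem[OF \<open>x \<in> R\<close>]] by auto
qed

lemma ex_pos_power_mem_ideal:
  assumes "is_ideal_in I R" "b \<in> R" "b ^ n \<in> I"
  shows "\<exists>e\<ge>1. b ^ e \<in> I"
  using is_ideal_inD(4)[OF assms(1,3,2)] by (intro exI[of _ "Suc n"]) simp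

lemma principal_ideal:
  assumes "a \<in> R"
  shows "is_ideal_in (principal_in a R) R"
  unfolding is_ideal_in_def principal_in_def
proof (intro conjI ballI)
  show "{a * r |r. r \<in> R} \<subseteq> R" using assms mult_mem by blast
  show "0 \<in> {a * r |r. r \<in> R}" using zero_mem by force
  fix x y assume "x \<in> {a * r |r. r \<in> R}" "y \<in> {a * r |r. r \<in> R}"
  then obtain r s where "x = a * r" "y = a * s" "r \<in> R" "s \<in> R" by blast
  then have "x + y = a * (r + s)" "r + s \<in> R"
    by (simp_all add: distrib_left add_mem)
  then show "x + y \<in> {a * r |r. r \<in> R}" by blast
next
  fix x t assume "x \<in> {a * r |r. r \<in> R}" "t \<in> R"
  then obtain r where "x = a * r" "r \<in> R" by blast
  then show "t * x \<in> {a * r |r. r \<in> R}"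
    using mult_mem \<open>t \<in> R\<close> by (auto simp: mult.left_commute)
qed

lemma ideal_add_principal:
  assumes M: "is_ideal_in M R" and "x \<in> R"
  shows "is_ideal_in {m + x * r | m r. m \<in> M \<and> r \<in> R} R"
  unfolding is_ideal_in_def
proof (intro conjI ballI)
  show "{m + x * r | m r. m \<in> M \<and> r \<in> R} \<subseteq> R"
    using is_ideal_inD(1)[OF M] \<open>x \<in> R\<close> add_mem mult_mem by blast
  show "0 \<in> {m + x * r | m r. m \<in> M \<and> r \<in> R}"
    using is_ideal_inD(2)[OF M] zero_mem by force
  fix a b assume "a \<in> {m + x * r | m r. m \<in> M \<and> r \<in> R}" "b \<in> {m + x * r | m r. m \<in> M \<and> r \<in> R}"
  then obtain m1 r1 m2 r2 where "a = m1 + x * r1" "b = m2 + x * r2"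
    "m1 \<in> M" "r1 \<in> R" "m2 \<in> M" "r2 \<in> R" by blast
  moreover have "m1 + x * r1 + (m2 + x * r2) = (m1 + m2) + x * (r1 + r2)"
    by (simp add: algebra_simps)
  ultimately show "a + b \<in> {m + x * r | m r. m \<in> M \<and> r \<in> R}"
    using is_ideal_inD(3)[OF M] add_mem by blast
next
  fix a s assume "a \<in> {m + x * r | m r. m \<in> M \<and> r \<in> R}" "s \<in> R"
  then obtain m r where "a = m + x * r" "m \<in> M" "r \<in> R" by blast
  moreover have "s * (m + x * r) = s * m + x * (s * r)" by (simp add: algebra_simps)
  ultimately show "s * a \<in> {m + x * r | m r. m \<in> M \<and> r \<in> R}"
    using is_ideal_inD(4)[OF M] mult_mem \<open>s \<in> R\<close> by blast
qed

lemma directed_Union_ideal: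
  assumes "\<F> \<noteq> {}" "\<And>I. I \<in> \<F> \<Longrightarrow> is_ideal_in I R"
    and directed: "\<And>I J. I \<in> \<F> \<Longrightarrow> J \<in> \<F> \<Longrightarrow> \<exists>K\<in>\<F>. I \<union> J \<subseteq> K"
  shows "is_ideal_in (\<Union>\<F>) R"
  unfolding is_ideal_in_def
proof (intro conjI ballI)
  show "\<Union>\<F> \<subseteq> R" "0 \<in> \<Union>\<F>"
    using assms(1,2) is_ideal_inD(1,2) by blast+
  fix x y assume "x \<in> \<Union>\<F>" "y \<in> \<Union>\<F>"
  then obtain I J where "I \<in> \<F>" "J \<in> \<F>" "x \<in> I" "y \<in> J" by blast
  then obtain K where "K \<in> \<F>" "x \<in> K" "y \<in> K" using directed by blast
  then show "x + y \<in> \<Union>\<F>" using assms(2) is_ideal_inD(3) by blast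
next
  fix x r assume "x \<in> \<Union>\<F>" "r \<in> R"
  then show "r * x \<in> \<Union>\<F>" using assms(2) is_ideal_inD(4) by blast
qed

lemma directed_Union_prime_ideal:
  assumes "\<F> \<noteq> {}" "\<And>P. P \<in> \<F> \<Longrightarrow> is_prime_ideal_in P R"
    and directed: "\<And>P Q. P \<in> \<F> \<Longrightarrow> Q \<in> \<F> \<Longrightarrow> \<exists>M\<in>\<F>. P \<union> Q \<subseteq> M"
  shows "is_prime_ideal_in (\<Union>\<F>) R"
  unfolding is_prime_ideal_in_def
proof (intro conjI ballI impI)
  show "is_ideal_in (\<Union>\<F>) R"
    using directed_Union_ideal assms is_prime_ideal_inD(1) by metis
  show "\<Union>\<F> \<noteq> R"
    using one_mem prime_ideal_one_not_mem assms(2) by blast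
  fix x y assume "x \<in> R" "y \<in> R" "x * y \<in> \<Union>\<F>"
  then show "x \<in> \<Union>\<F> \<or> y \<in> \<Union>\<F>"
    using assms(2) is_prime_ideal_inD(3) by blast
qed

lemma ex_prime_ideal_avoiding_powers:
  assumes I: "is_ideal_in I R" and "b \<in> R" and avoid: "\<And>n. b ^ n \<notin> I"
  shows "\<exists>P. is_prime_ideal_in P R \<and> I \<subseteq> P \<and> b \<notin> P"
proof -
  define \<A> where "\<A> = {J. is_ideal_in J R \<and> I \<subseteq> J \<and> (\<forall>n. b ^ n \<notin> J)}"
  have "\<Union>\<C> \<in> \<A>" if "\<C> \<noteq> {}" "subset.chain \<A> \<C>" for \<C>
  proof -
    have "is_ideal_in (\<Union>\<C>) R"
    proof (rule directed_Union_ideal)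
      show "is_ideal_in J R" if "J \<in> \<C>" for J
        using that \<open>subset.chain \<A> \<C>\<close> by (auto simp: \<A>_def subset_chain_def)
      show "\<exists>K\<in>\<C>. J \<union> J' \<subseteq> K" if "J \<in> \<C>" "J' \<in> \<C>" for J J'
        using that \<open>subset.chain \<A> \<C>\<close> unfolding subset_chain_def
        by (metis Un_absorb1 Un_absorb2 order_refl)
    qed fact
    then show ?thesis
      using that by (auto simp: \<A>_def subset_chain_def)
  qed
  moreover have "I \<in> \<A>" using I avoid by (simp add: \<A>_def)
  ultimately obtain M where "M \<in> \<A>" and M_max: "\<And>J. J \<in> \<A> \<Longrightarrow> M \<subseteq> J \<Longrightarrow> J = M"
    using subset_Zorn_nonempty[of \<A>] by blast
  then have M: "is_ideal_in M R" "I \<subseteq> M" "\<And>n. b ^ n \<notin> M" by (auto simp: \<A>_def)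
  have escape: "\<exists>n m r. m \<in> M \<and> r \<in> R \<and> b ^ n = m + x * r" if "x \<in> R" "x \<notin> M" for x
  proof (rule ccontr)
    assume no_escape: "\<not> ?thesis"
    let ?J = "{m + x * r | m r. m \<in> M \<and> r \<in> R}"
    have "M \<subseteq> ?J" using zero_mem by force
    moreover have "?J \<in> \<A>"
      using ideal_add_principal[OF M(1) \<open>x \<in> R\<close>] M(2) \<open>M \<subseteq> ?J\<close> no_escape
      by (auto simp: \<A>_def)
    ultimately have "?J = M" using M_max by blast
    moreover have "x \<in> ?J"
      using is_ideal_inD(2)[OF M(1)] one_mem by force
    ultimately show False using \<open>x \<notin> M\<close> by blast
  qed
  have "is_prime_ideal_in M R"
    unfolding is_prime_ideal_in_def
  proof (intro conjI ballI impI)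
    show "M \<noteq> R" using M(3)[of 0] one_mem by auto
    fix x y assume "x \<in> R" "y \<in> R" "x * y \<in> M"
    show "x \<in> M \<or> y \<in> M"
    proof (rule ccontr)
      assume "\<not> (x \<in> M \<or> y \<in> M)"
      then obtain k m1 r1 l m2 r2 where "m1 \<in> M" "r1 \<in> R" "b ^ k = m1 + x * r1"
        "m2 \<in> M" "r2 \<in> R" "b ^ l = m2 + y * r2"
        using escape \<open>x \<in> R\<close> \<open>y \<in> R\<close> by meson
      then have "b ^ (k + l) = (m1 * m2 + (x * r1) * m2 + (y * r2) * m1) + (r1 * r2) * (x * y)"
        by (simp add: power_add algebra_simps)
      also have "\<dots> \<in> M"
        using \<open>m1 \<in> M\<close> \<open>m2 \<in> M\<close> \<open>r1 \<in> R\<close> \<open>r2 \<in> R\<close> \<open>x \<in> R\<close> \<open>y \<in> R\<close> \<open>x * y \<in> M\<close>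
          is_ideal_inD[OF M(1)] mult_mem by (meson subsetD)
      finally show False using M(3) by blast
    qed
  qed fact
  moreover have "b \<notin> M" using M(3)[of 1] by simp
  ultimately show ?thesis using M(2) by blast
qed

lemma power_mem_principal_iff_prime:
  assumes "a \<in> R" "b \<in> R"
  shows "(\<exists>e\<ge>1. b ^ e \<in> principal_in a R)
    \<longleftrightarrow> (\<forall>P. is_prime_ideal_in P R \<longrightarrow> a \<in> P \<longrightarrow> b \<in> P)"
proof safe
  fix e P assume "b ^ e \<in> principal_in a R" and P: "is_prime_ideal_in P R" "a \<in> P"
  then obtain r where "b ^ e = r * a" "r \<in> R" by (auto simp: principal_in_def mult.commute)
  then have "b ^ e \<in> P" using is_ideal_inD(4)[OF is_prime_ideal_inD(1)[OF P(1)] P(2)] by simp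
  then show "b \<in> P" using prime_ideal_power_mem[OF P(1) \<open>b \<in> R\<close>] by blast
next
  assume b_mem_primes: "\<forall>P. is_prime_ideal_in P R \<longrightarrow> a \<in> P \<longrightarrow> b \<in> P"
  have "a \<in> principal_in a R" using one_mem by (force simp: principal_in_def)
  then obtain n where "b ^ n \<in> principal_in a R"
    using ex_prime_ideal_avoiding_powers[OF principal_ideal] assms b_mem_primes by blast
  then show "\<exists>e\<ge>1. b ^ e \<in> principal_in a R"
    using ex_pos_power_mem_ideal[OF principal_ideal] assms by blast
qed

lemma radical_principal_subset_iff:
  assumes "a \<in> R" "b \<in> R"
  shows "radical_in (principal_in b R) R \<subseteq> radical_in (principal_in a R) R
    \<longleftrightarrow> (\<exists>e\<ge>1. b ^ e \<in> principal_in a R)"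
proof
  assume sub: "radical_in (principal_in b R) R \<subseteq> radical_in (principal_in a R) R"
  have "b \<in> radical_in (principal_in b R) R"
    using assms one_mem by (force simp: radical_in_def principal_in_def intro: exI[of _ 1])
  then obtain n where "b ^ n \<in> principal_in a R"
    using sub by (auto simp: radical_in_def)
  then show "\<exists>e\<ge>1. b ^ e \<in> principal_in a R"
    using ex_pos_power_mem_ideal[OF principal_ideal] assms by blast
next
  assume "\<exists>e\<ge>1. b ^ e \<in> principal_in a R"
  then obtain e s where "b ^ e = a * s" "s \<in> R" by (auto simp: principal_in_def)
  show "radical_in (principal_in b R) R \<subseteq> radical_in (principal_in a R) R"
  proof
    fix x assume "x \<in> radical_in (principal_in b R) R"
    then obtain n r where "x \<in> R" "x ^ n = b * r" "r \<in> R"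
      by (auto simp: radical_in_def principal_in_def)
    then have "x ^ (n * e) = a * (s * r ^ e)"
      using \<open>b ^ e = a * s\<close> by (simp add: power_mult power_mult_distrib mult.assoc)
    moreover have "s * r ^ e \<in> R" using \<open>s \<in> R\<close> \<open>r \<in> R\<close> mult_mem power_mem by blast
    ultimately show "x \<in> radical_in (principal_in a R) R"
      using \<open>x \<in> R\<close> by (auto simp: radical_in_def principal_in_def)
  qed
qed

end

definition is_ring_hom_on :: "'b::comm_ring_1 set \<Rightarrow> ('b \<Rightarrow> 'c::comm_ring_1) \<Rightarrow> bool" where
  "is_ring_hom_on R \<phi> \<longleftrightarrow> \<phi> 1 = 1 \<and>
     (\<forall>x\<in>R. \<forall>y\<in>R. \<phi> (x + y) = \<phi> x + \<phi> y \<and> \<phi> (x * y) = \<phi> x * \<phi> y)"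

lemma is_ring_hom_on_comp:
  assumes "is_ring_hom_on R \<phi>" "is_ring_hom_on R \<psi>" "\<phi> ` R \<subseteq> R"
  shows "is_ring_hom_on R (\<psi> \<circ> \<phi>)"
  using assms unfolding is_ring_hom_on_def by (auto simp: image_subset_iff)

lemma (in subring) prime_ideal_kernel:
  fixes \<phi> :: "'b \<Rightarrow> 'c::idom"
  assumes hom: "is_ring_hom_on R \<phi>"
  shows "is_prime_ideal_in {x \<in> R. \<phi> x = 0} R"
proof -
  have "\<phi> 0 = \<phi> 0 + \<phi> 0"
    using hom zero_mem unfolding is_ring_hom_on_def by (metis add_0)
  then have "\<phi> 0 = 0" by (metis add.right_neutral add_left_cancel)
  moreover have "1 \<notin> {x \<in> R. \<phi> x = 0}"
    using hom by (simp add: is_ring_hom_on_def)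
  then have "{x \<in> R. \<phi> x = 0} \<noteq> R"
    using one_mem by blast
  ultimately show ?thesis
    using hom zero_mem add_mem mult_mem
    unfolding is_prime_ideal_in_def is_ideal_in_def is_ring_hom_on_def by auto
qed

section \<open>The reciprocal complement as the ring of sums of reciprocals\<close>

definition recip :: "'a::idom \<Rightarrow> 'a fract" where
  "recip d = inverse (Fract d 1)"

lemma recip_eq_Fract: "recip d = Fract 1 d"
  by (simp add: recip_def)

lemma recip_0 [simp]: "recip 0 = 0"
  by (simp add: recip_eq_Fract fract_collapse)

lemma recip_one [simp]: "recip 1 = 1"
  by (simp add: recip_eq_Fract One_fract_def)

lemma recip_eq_0_iff [simp]: "recip d = 0 \<longleftrightarrow> d = 0"
  by (cases "d = 0") (simp_all add: recip_eq_Fract Zero_fract_def eq_fract)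

lemma recip_mult: "recip (a * b) = recip a * recip b"
  by (simp add: recip_eq_Fract)

lemma recip_uminus: "recip (- d) = - recip d"
  by (simp add: recip_eq_Fract) (metis minus_fract_cancel minus_minus)

lemma recip_power: "recip (d ^ n) = recip d ^ n"
  by (induction n) (simp_all add: recip_mult)

definition recip_sum :: "'a::idom list \<Rightarrow> 'a fract" where
  "recip_sum ds = (\<Sum>d\<leftarrow>ds. recip d)"

lemma recip_sum_Nil [simp]: "recip_sum [] = 0"
  and recip_sum_Cons [simp]: "recip_sum (d # ds) = recip d + recip_sum ds"
  and recip_sum_append [simp]: "recip_sum (ds @ es) = recip_sum ds + recip_sum es"
  by (simp_all add: recip_sum_def)

lemma recip_sum_map_uminus: "recip_sum (map uminus ds) = - recip_sum ds"
  by (induction ds) (simp_all add: recip_uminus)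

lemma recip_sum_products: "recip_sum [a * b. a \<leftarrow> as, b \<leftarrow> bs] = recip_sum as * recip_sum bs"
proof -
  have "recip_sum (map (\<lambda>b. a * b) bs) = recip a * recip_sum bs" for a
    by (induction bs) (simp_all add: recip_mult distrib_left)
  then show ?thesis
    by (induction as) (simp_all add: distrib_right)
qed

lemma is_subring_recip_compl: "is_subring (recip_compl :: 'a::idom fract set)"
  unfolding is_subring_def recip_compl_def by auto

interpretation recip_compl: subring "recip_compl :: 'a::idom fract set"
  by (rule subring.intro) (rule is_subring_recip_compl)

lemma recip_mem_recip_compl: "recip d \<in> recip_compl"
proof (cases "d = 0")
  case True
  then show ?thesis using recip_compl.zero_mem by simp
next
  case False
  then show ?thesis by (auto simp: recip_compl_def recip_def)
qed

lemma recip_compl_eq_range_recip_sum: "recip_compl = range recip_sum"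
proof
  have recip_mem_range: "recip d \<in> range recip_sum" for d :: 'a
    using rangeI[of recip_sum "[d]"] by simp
  have "is_subring (range (recip_sum :: 'a list \<Rightarrow> 'a fract))"
    unfolding is_subring_def
  proof (intro conjI ballI)
    show "1 \<in> range (recip_sum :: 'a list \<Rightarrow> 'a fract)"
      using recip_mem_range[of 1] by simp
    fix x y :: "'a fract" assume "x \<in> range recip_sum" "y \<in> range recip_sum"
    then obtain ds es where "x = recip_sum ds" "y = recip_sum es" by blast
    then show "x + y \<in> range recip_sum" "- x \<in> range recip_sum" "x * y \<in> range recip_sum"
      by (metis rangeI recip_sum_append recip_sum_map_uminus recip_sum_products)+
  qed
  with recip_mem_range show "(recip_compl :: 'a fract set) \<subseteq> range recip_sum"
    unfolding recip_compl_def recip_def by (intro Inter_lower) auto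
  show "range recip_sum \<subseteq> (recip_compl :: 'a fract set)"
  proof clarify
    fix ds :: "'a list"
    show "recip_sum ds \<in> recip_compl"
      by (induction ds) (simp_all add: recip_compl.zero_mem recip_compl.add_mem recip_mem_recip_compl)
  qed
qed

section \<open>Retractions of the reciprocal complement onto its primes\<close>

definition recip_outside :: "'a::idom fract set \<Rightarrow> 'a set" where
  "recip_outside P = {d. recip d \<notin> P}"

definition recip_part :: "'a::idom set \<Rightarrow> 'a list \<Rightarrow> 'a fract" where
  "recip_part G ds = recip_sum (filter (\<lambda>d. d \<in> G) ds)"

lemma recip_part_append [simp]: "recip_part G (ds @ es) = recip_part G ds + recip_part G es"
  by (simp add: recip_part_def)

lemma recip_sum_eq_recip_part_add: "recip_sum ds = recip_part G ds + recip_part (- G) ds"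
  by (induction ds) (simp_all add: recip_part_def algebra_simps)

lemma recip_part_map_uminus:
  assumes "\<And>d. - d \<in> G \<longleftrightarrow> d \<in> G"
  shows "recip_part G (map uminus ds) = - recip_part G ds"
  by (induction ds) (simp_all add: recip_part_def recip_uminus assms)

lemma recip_part_products:
  assumes "\<And>a b. a * b \<in> G \<longleftrightarrow> a \<in> G \<and> b \<in> G"
  shows "recip_part G [a * b. a \<leftarrow> as, b \<leftarrow> bs] = recip_part G as * recip_part G bs"
proof -
  have "filter (\<lambda>d. d \<in> G) [a * b. a \<leftarrow> as, b \<leftarrow> bs]
      = [a * b. a \<leftarrow> filter (\<lambda>d. d \<in> G) as, b \<leftarrow> filter (\<lambda>d. d \<in> G) bs]"
    by (induction as) (auto simp: assms filter_map comp_def)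
  then show ?thesis by (simp add: recip_part_def recip_sum_products)
qed

context
  fixes P :: "'a::idom fract set"
  assumes P: "is_prime_ideal_in P recip_compl"
begin

lemma mult_mem_recip_outside_iff:
  "a * b \<in> recip_outside P \<longleftrightarrow> a \<in> recip_outside P \<and> b \<in> recip_outside P"
  using is_prime_ideal_inD(3)[OF P recip_mem_recip_compl recip_mem_recip_compl]
    is_ideal_inD(4)[OF is_prime_ideal_inD(1)[OF P] _ recip_mem_recip_compl]
  by (auto simp: recip_outside_def recip_mult) (metis mult.commute)

lemma one_mem_recip_outside: "1 \<in> recip_outside P"
  using recip_compl.prime_ideal_one_not_mem[OF P] by (simp add: recip_outside_def)

lemma uminus_mem_recip_outside_iff: "- d \<in> recip_outside P \<longleftrightarrow> d \<in> recip_outside P"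
  using mult_mem_recip_outside_iff[of "-1" "-1"] mult_mem_recip_outside_iff[of "-1" d]
    one_mem_recip_outside by auto

lemma recip_outside_nonzero: "d \<in> recip_outside P \<Longrightarrow> d \<noteq> 0"
  using is_ideal_inD(2)[OF is_prime_ideal_inD(1)[OF P]] by (auto simp: recip_outside_def)

lemma add_mem_recip_outside:
  assumes "a \<in> recip_outside P" "b \<in> recip_outside P" "a + b \<noteq> 0"
  shows "a + b \<in> recip_outside P"
proof (rule ccontr)
  have "a \<noteq> 0" "b \<noteq> 0" using assms recip_outside_nonzero by auto
  then have "(recip a + recip b) * recip (a + b) = Fract ((a + b) * 1) ((a + b) * (a * b))"
    by (simp add: recip_eq_Fract algebra_simps)
  also have "\<dots> = recip (a * b)"
    by (simp only: mult_fract_cancel[OF \<open>a + b \<noteq> 0\<close>] recip_eq_Fract)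
  finally have sum_identity: "(recip a + recip b) * recip (a + b) = recip (a * b)" .
  assume "a + b \<notin> recip_outside P"
  then have "recip (a + b) \<in> P" by (simp add: recip_outside_def)
  then have "(recip a + recip b) * recip (a + b) \<in> P"
    using is_ideal_inD(4)[OF is_prime_ideal_inD(1)[OF P]]
      recip_compl.add_mem[OF recip_mem_recip_compl recip_mem_recip_compl] by blast
  then show False
    using assms mult_mem_recip_outside_iff[of a b] by (simp add: sum_identity recip_outside_def)
qed

lemma recip_sum_recip_outside_eq_Fract:
  assumes "set ds \<subseteq> recip_outside P"
  shows "\<exists>n a. a \<in> recip_outside P \<and> (n = 0 \<or> n \<in> recip_outside P) \<and> recip_sum ds = Fract n a"
  using assms
proof (induction ds)
  case Nil
  show ?case using one_mem_recip_outside by (auto simp: Zero_fract_def)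
next
  case (Cons d ds)
  then obtain n a where "a \<in> recip_outside P" "n = 0 \<or> n \<in> recip_outside P"
    and "recip_sum ds = Fract n a" by auto
  moreover have "d \<in> recip_outside P" using Cons.prems by simp
  ultimately have "recip_sum (d # ds) = Fract (a + n * d) (d * a)" "d * a \<in> recip_outside P"
    "a + n * d = 0 \<or> a + n * d \<in> recip_outside P"
    using recip_outside_nonzero mult_mem_recip_outside_iff add_mem_recip_outside[of a "n * d"]
    by (auto simp: recip_eq_Fract)
  then show ?case by blast
qed

lemma recip_sum_recip_outside_mem_imp_zero:
  assumes "set ds \<subseteq> recip_outside P" "recip_sum ds \<in> P"
  shows "recip_sum ds = 0"
proof -
  obtain n a where a: "a \<in> recip_outside P" and n: "n = 0 \<or> n \<in> recip_outside P"
    and ds: "recip_sum ds = Fract n a"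
    using recip_sum_recip_outside_eq_Fract[OF assms(1)] by blast
  show ?thesis
  proof (cases "n = 0")
    case True
    then show ?thesis using ds by (simp add: fract_collapse)
  next
    case False
    have "recip n * recip_sum ds = Fract (n * 1) (n * a)"
      using ds by (simp add: recip_eq_Fract)
    also have "\<dots> = recip a"
      by (simp only: mult_fract_cancel[OF False] recip_eq_Fract)
    finally have "recip n * recip_sum ds = recip a" .
    moreover have "recip n * recip_sum ds \<in> P"
      using is_ideal_inD(4)[OF is_prime_ideal_inD(1)[OF P] assms(2) recip_mem_recip_compl] .
    ultimately show ?thesis using a by (simp add: recip_outside_def)
  qed
qed

lemma recip_part_complement_mem: "recip_part (- recip_outside P) ds \<in> P"
  using is_ideal_inD(2,3)[OF is_prime_ideal_inD(1)[OF P]]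
  by (induction ds) (auto simp: recip_part_def recip_outside_def)

lemma recip_sum_mem_prime_iff: "recip_sum ds \<in> P \<longleftrightarrow> recip_part (recip_outside P) ds = 0"
proof -
  let ?S = "recip_outside P"
  have split: "recip_sum ds = recip_part ?S ds + recip_part (- ?S) ds"
    by (rule recip_sum_eq_recip_part_add)
  show ?thesis
  proof
    assume "recip_sum ds \<in> P"
    have "recip_part ?S ds = recip_sum ds + - recip_part (- ?S) ds"
      using split by simp
    also have "\<dots> \<in> P"
      using is_ideal_inD(3,4)[OF is_prime_ideal_inD(1)[OF P]] \<open>recip_sum ds \<in> P\<close>
        recip_part_complement_mem recip_compl.uminus_mem recip_compl.one_mem
      by (metis mult_minus1)
    finally show "recip_part ?S ds = 0"
      using recip_sum_recip_outside_mem_imp_zero[of "filter (\<lambda>d. d \<in> ?S) ds"]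
      unfolding recip_part_def by fastforce
  next
    assume "recip_part ?S ds = 0"
    then show "recip_sum ds \<in> P" using split recip_part_complement_mem by simp
  qed
qed

lemma recip_part_eq_if_recip_sum_eq:
  assumes "recip_sum ds = recip_sum es"
  shows "recip_part (recip_outside P) ds = recip_part (recip_outside P) es"
proof -
  have "recip_sum (ds @ map uminus es) \<in> P"
    using assms is_ideal_inD(2)[OF is_prime_ideal_inD(1)[OF P]] by (simp add: recip_sum_map_uminus)
  then have "recip_part (recip_outside P) (ds @ map uminus es) = 0"
    by (simp only: recip_sum_mem_prime_iff)
  then show ?thesis
    by (simp add: recip_part_map_uminus uminus_mem_recip_outside_iff)
qed

end

definition recip_retract :: "'a::idom fract set \<Rightarrow> 'a fract \<Rightarrow> 'a fract" where
  "recip_retract P x = recip_part (recip_outside P) (SOME ds. x = recip_sum ds)"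

context
  fixes P :: "'a::idom fract set"
  assumes P: "is_prime_ideal_in P recip_compl"
begin

lemma recip_retract_recip_sum [simp]:
  "recip_retract P (recip_sum ds) = recip_part (recip_outside P) ds"
proof -
  have "recip_sum ds = recip_sum (SOME es. recip_sum ds = recip_sum es)"
    by (rule someI) (rule refl)
  then show ?thesis
    unfolding recip_retract_def by (metis recip_part_eq_if_recip_sum_eq[OF P])
qed

lemma recip_retract_0 [simp]: "recip_retract P 0 = 0"
  using recip_retract_recip_sum[of "[]"] by (simp add: recip_part_def)

lemma recip_retract_recip: "recip d \<notin> P \<Longrightarrow> recip_retract P (recip d) = recip d"
  using recip_retract_recip_sum[of "[d]"] by (simp add: recip_part_def recip_outside_def)

lemma recip_retract_mem: "x \<in> recip_compl \<Longrightarrow> recip_retract P x \<in> recip_compl"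
  by (auto simp: recip_compl_eq_range_recip_sum recip_part_def)

lemma is_ring_hom_on_recip_retract: "is_ring_hom_on recip_compl (recip_retract P)"
  unfolding is_ring_hom_on_def
proof (intro conjI ballI)
  show "recip_retract P 1 = 1"
    using recip_retract_recip[of 1] recip_compl.prime_ideal_one_not_mem[OF P] by simp
  fix x y :: "'a fract" assume "x \<in> recip_compl" "y \<in> recip_compl"
  then obtain ds es where "x = recip_sum ds" "y = recip_sum es"
    by (auto simp: recip_compl_eq_range_recip_sum)
  then show "recip_retract P (x + y) = recip_retract P x + recip_retract P y"
    "recip_retract P (x * y) = recip_retract P x * recip_retract P y"
    by (simp_all flip: recip_sum_append recip_sum_products
        add: recip_part_products mult_mem_recip_outside_iff[OF P])
qed

lemma mem_prime_iff_recip_retract: "x \<in> P \<longleftrightarrow> x \<in> recip_compl \<and> recip_retract P x = 0"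
  using is_ideal_inD(1)[OF is_prime_ideal_inD(1)[OF P]]
  by (auto simp: recip_compl_eq_range_recip_sum recip_sum_mem_prime_iff[OF P])

end

lemma recip_retract_commute:
  assumes "is_prime_ideal_in P recip_compl" "is_prime_ideal_in Q recip_compl" "x \<in> recip_compl"
  shows "recip_retract P (recip_retract Q x) = recip_retract Q (recip_retract P x)"
proof -
  obtain ds where "x = recip_sum ds"
    using assms(3) by (auto simp: recip_compl_eq_range_recip_sum)
  then show ?thesis
    using assms(1,2) by (simp add: recip_part_def conj_commute)
qed

section \<open>The prime ideals p_f\<close>

definition primes_avoiding_recip :: "'a::idom \<Rightarrow> 'a fract set set" where
  "primes_avoiding_recip f = {P. is_prime_ideal_in P recip_compl \<and> recip f \<notin> P}"

lemma primes_avoiding_recip_directed: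
  assumes "P \<in> primes_avoiding_recip f" "Q \<in> primes_avoiding_recip f"
  shows "\<exists>M\<in>primes_avoiding_recip f. P \<union> Q \<subseteq> M"
proof -
  have P: "is_prime_ideal_in P recip_compl" "recip f \<notin> P"
    and Q: "is_prime_ideal_in Q recip_compl" "recip f \<notin> Q"
    using assms by (simp_all add: primes_avoiding_recip_def)
  let ?M = "{x \<in> recip_compl. (recip_retract P \<circ> recip_retract Q) x = 0}"
  have "is_prime_ideal_in ?M recip_compl"
    using is_ring_hom_on_comp[OF is_ring_hom_on_recip_retract[OF Q(1)]
        is_ring_hom_on_recip_retract[OF P(1)]] recip_retract_mem[OF Q(1)]
    by (intro recip_compl.prime_ideal_kernel) blast
  moreover have "recip f \<notin> ?M"
    using P Q is_ideal_inD(2)[OF is_prime_ideal_inD(1)[OF P(1)]]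
    by (auto simp: recip_retract_recip)
  moreover have "Q \<subseteq> ?M"
    using recip_retract_0[OF P(1)] by (auto simp: mem_prime_iff_recip_retract[OF Q(1)])
  moreover have "P \<subseteq> ?M"
    using recip_retract_0[OF Q(1)] recip_retract_commute[OF P(1) Q(1)]
    by (auto simp: mem_prime_iff_recip_retract[OF P(1)])
  ultimately show ?thesis by (auto simp: primes_avoiding_recip_def)
qed

lemma prime_ideal_Union_primes_avoiding_recip:
  assumes "f \<noteq> 0"
  shows "is_prime_ideal_in (\<Union>(primes_avoiding_recip f)) recip_compl"
proof (rule recip_compl.directed_Union_prime_ideal)
  have "is_prime_ideal_in {x \<in> recip_compl. id x = 0} recip_compl"
    by (rule recip_compl.prime_ideal_kernel) (simp add: is_ring_hom_on_def)
  moreover have "{x \<in> recip_compl. id x = 0} = {0}"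
    using recip_compl.zero_mem by auto
  ultimately have "is_prime_ideal_in {0} recip_compl" by metis
  then show "primes_avoiding_recip f \<noteq> {}"
    using assms by (auto simp: primes_avoiding_recip_def)
next
  fix P assume "P \<in> primes_avoiding_recip f"
  then show "is_prime_ideal_in P recip_compl" by (simp add: primes_avoiding_recip_def)
qed (rule primes_avoiding_recip_directed)

lemma p_ideal_eq_Union_primes_avoiding_recip:
  assumes "f \<noteq> 0"
  shows "p_ideal f = \<Union>(primes_avoiding_recip f)"
  unfolding p_ideal_def recip_def[symmetric]
  by (rule the_equality)
    (use prime_ideal_Union_primes_avoiding_recip[OF assms] in \<open>auto simp: primes_avoiding_recip_def\<close>)+

lemma p_ideal_subset_iff:
  assumes "f \<noteq> 0" "g \<noteq> 0"
  shows "p_ideal g \<subseteq> p_ideal f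
    \<longleftrightarrow> (\<forall>P. is_prime_ideal_in P recip_compl \<longrightarrow> recip f \<in> P \<longrightarrow> recip g \<in> P)"
  using prime_ideal_Union_primes_avoiding_recip[OF assms(2)]
  unfolding p_ideal_eq_Union_primes_avoiding_recip[OF assms(1)]
    p_ideal_eq_Union_primes_avoiding_recip[OF assms(2)] primes_avoiding_recip_def by blast

theorem mainTheorem10:
  fixes f g :: "'a::idom"
  assumes "f \<noteq> 0" and "g \<noteq> 0"
  shows "(p_ideal g \<subseteq> p_ideal f
           \<longleftrightarrow> radical_in (principal_in (inverse (Fract g 1)) recip_compl) recip_compl
               \<subseteq> radical_in (principal_in (inverse (Fract f 1)) recip_compl) recip_compl)
       \<and> (radical_in (principal_in (inverse (Fract g 1)) recip_compl) recip_compl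
               \<subseteq> radical_in (principal_in (inverse (Fract f 1)) recip_compl) recip_compl
           \<longleftrightarrow> (\<exists>e::nat. e \<ge> 1 \<and> inverse (Fract (g ^ e) 1)
                  \<in> principal_in (inverse (Fract f 1)) recip_compl))"
  unfolding recip_def[symmetric] recip_power p_ideal_subset_iff[OF assms]
    recip_compl.radical_principal_subset_iff[OF recip_mem_recip_compl recip_mem_recip_compl]
    recip_compl.power_mem_principal_iff_prime[OF recip_mem_recip_compl recip_mem_recip_compl]
  by simp

end
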